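(* Let $n\ge3$ be odd and $n-1<s\le n$. Then $$\max\{\operatorname{per}(I-A): A\in\tilde\omega_n^s\}=2^{(n-1)/2}.$$ The maximum is attained by $M_2\oplus\cdots\oplus M_2\oplus M_3$ with $(n-3)/2$ copies of $M_2=\begin{pmatrix}0&1\\1&0\end{pmatrix}$ and $M_3=\begin{pmatrix}0&1&0\\1&0&0\\0&s-(n-1)&0\end{pmatrix}$.
   Context: An $n\times n$ matrix is row substochastic if all entries are nonnegative and each row sum is at most $1$. $\sigma(A)$ is the sum of all entries of $A$, and $\tilde\omega_n^s$ is the set of $n\times n$ row substochastic matrices $A$ with $\sigma(A)=s$. $\oplus$ is block-diagonal direct sum. The permanent is $\operatorname{per}(M)=\sum_{\pi\in S_n}\prod_i m_{i\pi(i)}$, and $I$ is the identity matrix. *)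

theory Defs
  imports "HOL-Combinatorics.Permutations" Complex_Main
begin

text \<open>An n x n real matrix is represented as a function nat => nat => real,
  with entries indexed by {..<n}; entries outside are required to be 0 where relevant.\<close>

definition per :: "nat \<Rightarrow> (nat \<Rightarrow> nat \<Rightarrow> real) \<Rightarrow> real" where
  "per n M = (\<Sum>p\<in>{p. p permutes {..<n}}. \<Prod>i<n. M i (p i))"

definition idm :: "nat \<Rightarrow> nat \<Rightarrow> real" where
  "idm i j = (if i = j then 1 else 0)"

definition mat_minus :: "(nat \<Rightarrow> nat \<Rightarrow> real) \<Rightarrow> (nat \<Rightarrow> nat \<Rightarrow> real) \<Rightarrow> nat \<Rightarrow> nat \<Rightarrow> real" where
  "mat_minus A B i j = A i j - B i j"

definition sigma_sum :: "nat \<Rightarrow> (nat \<Rightarrow> nat \<Rightarrow> real) \<Rightarrow> real" where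
  "sigma_sum n A = (\<Sum>i<n. \<Sum>j<n. A i j)"

definition row_substochastic :: "nat \<Rightarrow> (nat \<Rightarrow> nat \<Rightarrow> real) \<Rightarrow> bool" where
  "row_substochastic n A \<longleftrightarrow> (\<forall>i<n. \<forall>j<n. 0 \<le> A i j) \<and> (\<forall>i<n. (\<Sum>j<n. A i j) \<le> 1)"

definition substoch_set :: "nat \<Rightarrow> real \<Rightarrow> (nat \<Rightarrow> nat \<Rightarrow> real) set" where
  "substoch_set n s = {A. (\<forall>i j. (n \<le> i \<or> n \<le> j) \<longrightarrow> A i j = 0)
      \<and> row_substochastic n A \<and> sigma_sum n A = s}"

definition dsum :: "nat \<Rightarrow> (nat \<Rightarrow> nat \<Rightarrow> real) \<Rightarrow> nat \<Rightarrow> (nat \<Rightarrow> nat \<Rightarrow> real) \<Rightarrow> nat \<Rightarrow> nat \<Rightarrow> real" where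
  "dsum p A q B i j =
     (if i < p \<and> j < p then A i j
      else if p \<le> i \<and> i < p + q \<and> p \<le> j \<and> j < p + q then B (i - p) (j - p)
      else 0)"

definition M2 :: "nat \<Rightarrow> nat \<Rightarrow> real" where
  "M2 i j = (if (i = 0 \<and> j = 1) \<or> (i = 1 \<and> j = 0) then 1 else 0)"

definition M3 :: "nat \<Rightarrow> real \<Rightarrow> nat \<Rightarrow> nat \<Rightarrow> real" where
  "M3 n s i j = (if (i = 0 \<and> j = 1) \<or> (i = 1 \<and> j = 0) then 1
                 else if i = 2 \<and> j = 1 then s - (real n - 1) else 0)"

fun M2_copies :: "nat \<Rightarrow> nat \<Rightarrow> nat \<Rightarrow> real" where
  "M2_copies 0 = (\<lambda>i j. 0)"
| "M2_copies (Suc k) = dsum 2 M2 (2 * k) (M2_copies k)"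

definition extremal :: "nat \<Rightarrow> real \<Rightarrow> nat \<Rightarrow> nat \<Rightarrow> real" where
  "extremal n s = dsum (n - 3) (M2_copies ((n - 3) div 2)) 3 (M3 n s)"

end

theory Submission
  imports Defs
begin

text \<open>Upper bound: row \<open>i\<close> of \<open>I - A\<close> is a convex combination of the rows \<open>e\<^sub>i - e\<^sub>k\<close> and \<open>e\<^sub>i\<close>,
  so by multilinearity \<open>per (I - A)\<close> is at most the largest permanent of a matrix \<open>I - P\<^sub>g\<close> whose
  \<open>i\<close>-th row is \<open>e\<^sub>i - e\<^sub>g\<^sub>(\<^sub>i\<^sub>)\<close>. Its nonzero terms come from permutations \<open>p\<close> with \<open>p i \<in> {i, g i}\<close>;
  such a \<open>p\<close> agrees with \<open>g\<close> on a union of cycles of \<open>g\<close> of length at least 2 and is the identity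
  elsewhere, so there are at most \<open>2\<^bsup>\<lfloor>n/2\<rfloor>\<^esup>\<close> of them, each term of modulus at most 1.
  Lower bound: all terms of \<open>per (I - E)\<close> are nonnegative, and each of the \<open>2\<^bsup>(n-1)/2\<^esup>\<close>
  permutations swapping some of the \<open>2\<times>2\<close> blocks of \<open>E\<close> contributes exactly 1.\<close>

definition perms_following :: "('a \<Rightarrow> 'a) \<Rightarrow> 'a set \<Rightarrow> ('a \<Rightarrow> 'a) set" where
  "perms_following f X = {p. p permutes X \<and> (\<forall>x\<in>X. p x = x \<or> p x = f x)}"

lemma finite_perms_following: "finite X \<Longrightarrow> finite (perms_following f X)"
  by (rule finite_subset[OF _ finite_permutations[of X]]) (auto simp: perms_following_def)

lemma perms_following_moved:
  assumes "p \<in> perms_following f X" "z \<in> X" "p z \<noteq> z"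
  shows "p z = f z" "f z \<in> X" "p (f z) \<noteq> f z"
proof -
  have p_perm: "p permutes X" using assms(1) by (simp add: perms_following_def)
  show pz: "p z = f z" using assms by (auto simp: perms_following_def)
  show "f z \<in> X" using pz permutes_in_image[OF p_perm, of z] assms(2) by simp
  show "p (f z) \<noteq> f z" using pz assms(3) permutes_inj[OF p_perm] by (metis injD)
qed

text \<open>A minimal nonempty \<open>f\<close>-invariant set \<open>C\<close> of points moved by \<open>p\<^sub>0\<close> is rigid: the points of
  \<open>C\<close> moved by any other \<open>p\<close> again form an \<open>f\<close>-invariant set, so \<open>p\<close> moves all or none of them.\<close>

lemma perms_following_rigid_block:
  assumes "finite X" and p0: "p0 \<in> perms_following f X" and "p0 x \<noteq> x"
  obtains C where "C \<subseteq> X" "2 \<le> card C" "f ` C \<subseteq> C"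
    and "\<And>p. p \<in> perms_following f X \<Longrightarrow> (\<forall>z\<in>C. p z = z) \<or> (\<forall>z\<in>C. p z = f z)"
proof -
  define M where "M = {z\<in>X. p0 z \<noteq> z}"
  define S where "S = {C. C \<noteq> {} \<and> C \<subseteq> M \<and> f ` C \<subseteq> C}"
  have "x \<in> X" using \<open>p0 x \<noteq> x\<close> p0 permutes_not_in by (fastforce simp: perms_following_def)
  hence "M \<in> S" using \<open>p0 x \<noteq> x\<close> perms_following_moved[OF p0] by (auto simp: S_def M_def)
  then obtain C where "C \<in> S" and C_min: "\<And>C'. C' \<in> S \<Longrightarrow> card C \<le> card C'"
    using ex_has_least_nat[of "\<lambda>C. C \<in> S" M card] by blast
  hence CM: "C \<subseteq> M" and "C \<noteq> {}" and fC: "f ` C \<subseteq> C" by (auto simp: S_def)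
  have CX: "C \<subseteq> X" using CM by (auto simp: M_def)
  have finC: "finite C" using CX \<open>finite X\<close> finite_subset by blast
  have C2: "2 \<le> card C"
  proof -
    obtain c where "c \<in> C" using \<open>C \<noteq> {}\<close> by blast
    hence sub: "{c, f c} \<subseteq> C" and ne: "f c \<noteq> c"
      using fC CM perms_following_moved(1)[OF p0, of c] by (auto simp: M_def)
    show ?thesis using card_mono[OF finC sub] ne by simp
  qed
  have rigid: "(\<forall>z\<in>C. p z = z) \<or> (\<forall>z\<in>C. p z = f z)" if p: "p \<in> perms_following f X" for p
  proof -
    define D where "D = C \<inter> {z. p z \<noteq> z}"
    have "f z \<in> D" if "z \<in> D" for z
    proof -
      have "z \<in> X" "z \<in> C" "p z \<noteq> z" using that CX by (auto simp: D_def)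
      thus ?thesis using perms_following_moved(3)[OF p] fC by (auto simp: D_def)
    qed
    moreover have "D \<subseteq> C" by (auto simp: D_def)
    ultimately have "D = {} \<or> D \<in> S" using CM by (auto simp: S_def)
    hence "D = {} \<or> card C \<le> card D" using C_min by blast
    hence "D = {} \<or> D = C"
      using \<open>D \<subseteq> C\<close> card_mono[OF finC] card_subset_eq[OF finC] by (metis le_antisym)
    thus ?thesis using perms_following_moved(1)[OF p] CX by (auto simp: D_def)
  qed
  show ?thesis by (rule that[OF CX C2 fC rigid])
qed

lemma card_perms_following_remove_block:
  assumes "finite X" "C \<subseteq> X" "f ` C \<subseteq> C"
    and rigid: "\<And>p. p \<in> perms_following f X \<Longrightarrow> (\<forall>z\<in>C. p z = z) \<or> (\<forall>z\<in>C. p z = f z)"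
  shows "card (perms_following f X) \<le> 2 * card (perms_following f (X - C))"
proof -
  have finC: "finite C" using assms(1,2) finite_subset by blast
  define restrict where "restrict p = (\<lambda>z. if z \<in> C then z else p z)" for p :: "'a \<Rightarrow> 'a"
  define extend where "extend = (\<lambda>(b::bool, q). \<lambda>z. if z \<in> C then (if b then f z else z) else q z)"
  have restrict_mem: "restrict p \<in> perms_following f (X - C)" if p: "p \<in> perms_following f X" for p
  proof -
    have p_perm: "p permutes X" using p by (auto simp: perms_following_def)
    have "p ` C \<subseteq> C" using rigid[OF p] \<open>f ` C \<subseteq> C\<close> by auto
    moreover have "card (p ` C) = card C"
      using card_image permutes_inj[OF p_perm] inj_on_subset by blast
    ultimately have pC: "p ` C = C" using card_subset_eq[OF finC] by blast
    have "p ` (X - C) = X - C"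
      using pC permutes_image[OF p_perm] by (simp add: image_set_diff permutes_inj[OF p_perm])
    hence "bij_betw p (X - C) (X - C)"
      unfolding bij_betw_def using permutes_inj[OF p_perm] inj_on_subset by blast
    hence "bij_betw (restrict p) (X - C) (X - C)"
      by (rule bij_betw_cong[THEN iffD1, rotated]) (auto simp: restrict_def)
    moreover have "restrict p z = z" if "z \<notin> X - C" for z
      using that permutes_not_in[OF p_perm] by (auto simp: restrict_def)
    ultimately have "restrict p permutes (X - C)" by (rule bij_imp_permutes)
    thus ?thesis using p by (auto simp: perms_following_def restrict_def)
  qed
  have "perms_following f X \<subseteq> extend ` (UNIV \<times> perms_following f (X - C))"
  proof
    fix p assume p: "p \<in> perms_following f X"
    have "p = extend (\<forall>z\<in>C. p z = f z, restrict p)"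
      using rigid[OF p] by (auto simp: extend_def restrict_def fun_eq_iff)
    thus "p \<in> extend ` (UNIV \<times> perms_following f (X - C))"
      using restrict_mem[OF p] by blast
  qed
  moreover have fin: "finite (UNIV \<times> perms_following f (X - C) :: (bool \<times> _) set)"
    using assms(1) by (simp add: finite_perms_following)
  ultimately have "card (perms_following f X) \<le> card (extend ` (UNIV \<times> perms_following f (X - C)))"
    by (intro card_mono finite_imageI)
  also have "\<dots> \<le> card (UNIV \<times> perms_following f (X - C) :: (bool \<times> _) set)"
    by (rule card_image_le[OF fin])
  also have "\<dots> = 2 * card (perms_following f (X - C))"
    by (simp add: card_cartesian_product)
  finally show ?thesis .
qed

lemma card_perms_following_le:
  assumes "finite X"
  shows "card (perms_following f X) \<le> 2 ^ (card X div 2)"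
  using assms
proof (induction "card X" arbitrary: X rule: less_induct)
  case less
  show ?case
  proof (cases "\<exists>p\<in>perms_following f X. \<exists>x. p x \<noteq> x")
    case False
    hence "perms_following f X \<subseteq> {id}" by (auto simp: fun_eq_iff)
    hence "card (perms_following f X) \<le> 1" using card_mono[of "{id}"] by simp
    thus ?thesis by (meson le_trans one_le_power one_le_numeral)
  next
    case True
    then obtain p0 x where "p0 \<in> perms_following f X" "p0 x \<noteq> x" by blast
    then obtain C where CX: "C \<subseteq> X" and C2: "2 \<le> card C" and "f ` C \<subseteq> C"
      and rigid: "\<And>p. p \<in> perms_following f X \<Longrightarrow> (\<forall>z\<in>C. p z = z) \<or> (\<forall>z\<in>C. p z = f z)"
      using perms_following_rigid_block[OF less.prems] by blast
    have finC: "finite C" using CX less.prems finite_subset by blast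
    have card_diff: "card (X - C) = card X - card C" and "card C \<le> card X"
      using card_Diff_subset[OF finC CX] card_mono[OF less.prems CX] by auto
    hence "card (X - C) < card X" using C2 by linarith
    hence IH: "card (perms_following f (X - C)) \<le> 2 ^ (card (X - C) div 2)"
      using less.hyps less.prems by blast
    have "Suc (card (X - C) div 2) \<le> card X div 2"
      using card_diff C2 \<open>card C \<le> card X\<close> by linarith
    hence "(2::nat) ^ Suc (card (X - C) div 2) \<le> 2 ^ (card X div 2)"
      by (rule power_increasing) simp
    moreover have "card (perms_following f X) \<le> 2 * card (perms_following f (X - C))"
      using rigid by (rule card_perms_following_remove_block[OF less.prems CX \<open>f ` C \<subseteq> C\<close>])
    ultimately show ?thesis using IH by simp
  qed
qed

lemma per_le_if_rows_convex:
  fixes M :: "nat \<Rightarrow> nat \<Rightarrow> real" and V :: "nat \<Rightarrow> 'k \<Rightarrow> nat \<Rightarrow> real"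
  assumes "finite K"
    and rows: "\<And>i j. i < n \<Longrightarrow> j < n \<Longrightarrow> M i j = (\<Sum>k\<in>K. w i k * V i k j)"
    and w_nonneg: "\<And>i k. i < n \<Longrightarrow> k \<in> K \<Longrightarrow> 0 \<le> w i k"
    and w_sum: "\<And>i. i < n \<Longrightarrow> (\<Sum>k\<in>K. w i k) = 1"
    and bound: "\<And>g. g \<in> PiE {..<n} (\<lambda>_. K) \<Longrightarrow> per n (\<lambda>i. V i (g i)) \<le> b"
  shows "per n M \<le> b"
proof -
  let ?P = "{p. p permutes {..<n}}" and ?G = "PiE {..<n} (\<lambda>_. K)"
  have "per n M = (\<Sum>p\<in>?P. \<Prod>i<n. \<Sum>k\<in>K. w i k * V i k (p i))"
    unfolding per_def
    by (intro sum.cong prod.cong refl rows) (auto dest: permutes_in_image)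
  also have "\<dots> = (\<Sum>p\<in>?P. \<Sum>g\<in>?G. \<Prod>i<n. w i (g i) * V i (g i) (p i))"
    by (intro sum.cong refl prod_sum_PiE) (simp_all add: \<open>finite K\<close>)
  also have "\<dots> = (\<Sum>g\<in>?G. (\<Prod>i<n. w i (g i)) * per n (\<lambda>i. V i (g i)))"
    by (subst sum.swap) (simp add: per_def prod.distrib sum_distrib_left)
  also have "\<dots> \<le> (\<Sum>g\<in>?G. (\<Prod>i<n. w i (g i)) * b)"
    by (intro sum_mono mult_left_mono prod_nonneg bound) (auto simp: w_nonneg PiE_iff)
  also have "\<dots> = (\<Prod>i<n. \<Sum>k\<in>K. w i k) * b"
    by (subst prod_sum_PiE) (simp_all add: \<open>finite K\<close> sum_distrib_right)
  also have "\<dots> = b" by (simp add: w_sum)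
  finally show ?thesis .
qed

text \<open>A term of the permanent of \<open>I - P\<^sub>g\<close>, where row \<open>i\<close> of \<open>P\<^sub>g\<close> is the unit vector at \<open>g i\<close>
  (or zero if \<open>g i \<ge> n\<close>), vanishes unless \<open>p\<close> follows \<open>g\<close>, and otherwise has modulus at most 1.\<close>

lemma per_id_minus_unit_rows_le:
  fixes g :: "nat \<Rightarrow> nat"
  shows "per n (\<lambda>i j. idm i j - idm (g i) j) \<le> 2 ^ (n div 2)"
proof -
  let ?P = "{p. p permutes {..<n}}" and ?F = "perms_following g {..<n}"
  let ?t = "\<lambda>p. \<Prod>i<n. idm i (p i) - idm (g i) (p i)"
  have "?t p \<le> (if p \<in> ?F then 1 else 0)" if p: "p \<in> ?P" for p
  proof (cases "p \<in> ?F")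
    case True
    have "?t p \<le> (\<Prod>i<n. \<bar>idm i (p i) - idm (g i) (p i)\<bar>)"
      by (simp add: abs_prod[symmetric])
    also have "\<dots> \<le> 1" by (rule prod_le_1) (auto simp: idm_def)
    finally show ?thesis using True by simp
  next
    case False
    then obtain i where "i < n" "p i \<noteq> i" "p i \<noteq> g i"
      using p by (auto simp: perms_following_def)
    hence "idm i (p i) - idm (g i) (p i) = 0" by (simp add: idm_def)
    hence "?t p = 0" using \<open>i < n\<close> by (intro prod_zero) auto
    thus ?thesis using False by (simp only: if_not_P if_False order_refl)
  qed
  hence "per n (\<lambda>i j. idm i j - idm (g i) j) \<le> (\<Sum>p\<in>?P. if p \<in> ?F then 1 else 0)"
    unfolding per_def by (intro sum_mono) blast
  also have "\<dots> = real (card ?F)"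
  proof -
    have "?F \<subseteq> ?P" by (auto simp: perms_following_def)
    thus ?thesis by (simp add: sum.If_cases finite_permutations Int_absorb1)
  qed
  also have "\<dots> \<le> 2 ^ (n div 2)"
    using card_perms_following_le[of "{..<n}" g] by (simp flip: of_nat_le_iff)
  finally show ?thesis .
qed

text \<open>The index \<open>k = n\<close> stands for the row \<open>e\<^sub>i\<close>, which takes up the weight \<open>1 - (\<Sum>j<n. A i j)\<close>
  missing from row \<open>i\<close> of \<open>A\<close>.\<close>

lemma per_id_minus_row_substochastic_le:
  assumes "row_substochastic n A"
  shows "per n (mat_minus idm A) \<le> 2 ^ (n div 2)"
proof -
  define w where "w i k = (if k < n then A i k else 1 - (\<Sum>j<n. A i j))" for i k
  have w_sum: "(\<Sum>k\<le>n. w i k) = 1" for i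
    by (simp add: w_def lessThan_Suc_atMost[symmetric])
  have w_nonneg: "0 \<le> w i k" if "i < n" for i k
    using assms that by (auto simp: w_def row_substochastic_def)
  have rows: "mat_minus idm A i j = (\<Sum>k\<le>n. w i k * (idm i j - idm k j))" if "j < n" for i j
  proof -
    have "(\<Sum>k\<le>n. w i k * idm k j) = w i j"
      using that by (simp add: idm_def if_distrib[of "\<lambda>x. w i _ * x"] cong: if_cong)
    thus ?thesis using that w_sum
      by (simp add: mat_minus_def w_def right_diff_distrib sum_subtractf sum_distrib_right[symmetric])
  qed
  show ?thesis
    by (rule per_le_if_rows_convex[OF finite_atMost rows w_nonneg w_sum per_id_minus_unit_rows_le])
qed

definition partner :: "nat \<Rightarrow> nat" where
  "partner i = (if even i then i + 1 else i - 1)"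

lemma partner_eq_iff: "j = partner i \<longleftrightarrow> j div 2 = i div 2 \<and> j \<noteq> i"
  by (auto simp: partner_def elim!: evenE oddE)

lemma partner_neq [simp]: "partner i \<noteq> i"
  using partner_eq_iff by blast

lemma partner_div2 [simp]: "partner i div 2 = i div 2"
  using partner_eq_iff by blast

lemma partner_partner [simp]: "partner (partner i) = i"
  using partner_eq_iff by (metis partner_div2 partner_neq)

lemma partner_less_iff: "partner i < 2 * k \<longleftrightarrow> i < 2 * k"
  by (metis partner_div2 div_less_iff_less_mult zero_less_numeral mult.commute)

lemma M2_copies_eq: "M2_copies k i j = (if i < 2 * k \<and> j = partner i then 1 else 0)"
proof (induction k arbitrary: i j)
  case (Suc k)
  consider "i < 2" "j < 2" | "2 \<le> i" "i < 2 * Suc k" "2 \<le> j" "j < 2 * Suc k"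
    | "\<not> (i < 2 \<and> j < 2)" "\<not> (2 \<le> i \<and> i < 2 * Suc k \<and> 2 \<le> j \<and> j < 2 * Suc k)"
    by linarith
  thus ?case
  proof cases
    case 1
    thus ?thesis by (auto simp: dsum_def M2_def partner_eq_iff)
  next
    case 2
    hence "j - 2 = partner (i - 2) \<longleftrightarrow> j = partner i"
      using le_div_geq[of 2 i] le_div_geq[of 2 j] by (auto simp: partner_eq_iff)
    thus ?thesis using 2 Suc.IH by (auto simp: dsum_def)
  next
    case 3
    have "\<not> (i < 2 * Suc k \<and> j = partner i)"
      using 3 partner_less_iff[of i 1] partner_less_iff[of i "Suc k"] by auto
    thus ?thesis using 3 by (auto simp: dsum_def)
  qed
qed simp

lemma extremal_eq:
  "extremal (2 * m + 3) s i j =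
     (if i < 2 * m + 2 \<and> j = partner i then 1
      else if i = 2 * m + 2 \<and> j = 2 * m + 1 then s - (real (2 * m + 3) - 1) else 0)"
proof -
  have ext: "extremal (2 * m + 3) s = dsum (2 * m) (M2_copies m) 3 (M3 (2 * m + 3) s)"
    by (simp add: extremal_def)
  consider "i < 2 * m" "j < 2 * m" | "2 * m \<le> i" "i < 2 * m + 3" "2 * m \<le> j" "j < 2 * m + 3"
    | "\<not> (i < 2 * m \<and> j < 2 * m)" "\<not> (2 * m \<le> i \<and> i < 2 * m + 3 \<and> 2 * m \<le> j \<and> j < 2 * m + 3)"
    by linarith
  thus ?thesis
  proof cases
    case 1
    thus ?thesis by (simp add: ext dsum_def M2_copies_eq)
  next
    case 2
    hence "i \<in> {2 * m, 2 * m + 1, 2 * m + 2}" "j \<in> {2 * m, 2 * m + 1, 2 * m + 2}" by auto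
    thus ?thesis by (auto simp: ext dsum_def M3_def partner_def)
  next
    case 3
    have "\<not> (i < 2 * m + 2 \<and> j = partner i)"
      using 3 partner_less_iff[of i m] partner_less_iff[of i "Suc m"] by auto
    thus ?thesis using 3 by (auto simp: ext dsum_def)
  qed
qed

lemma extremal_row_sum:
  assumes "i < 2 * m + 3"
  shows "(\<Sum>j<2 * m + 3. extremal (2 * m + 3) s i j) =
           (if i < 2 * m + 2 then 1 else s - (real (2 * m + 3) - 1))"
proof (cases "i < 2 * m + 2")
  case True
  hence "extremal (2 * m + 3) s i j = (if j = partner i then 1 else 0)" for j
    by (simp add: extremal_eq)
  moreover have "partner i < 2 * m + 3" using True partner_less_iff[of i "Suc m"] by simp
  ultimately show ?thesis using True by simp
next
  case False
  hence "i = 2 * m + 2" using assms by simp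
  thus ?thesis by (simp add: extremal_eq cong: if_cong)
qed

lemma extremal_mem_substoch_set:
  assumes "real (2 * m + 3) - 1 \<le> s" "s \<le> real (2 * m + 3)"
  shows "extremal (2 * m + 3) s \<in> substoch_set (2 * m + 3) s"
proof -
  let ?n = "2 * m + 3" and ?E = "extremal (2 * m + 3) s"
  have "?E i j = 0" if "?n \<le> i \<or> ?n \<le> j" for i j
    using that partner_less_iff[of i "Suc m"] by (auto simp: extremal_eq)
  moreover have "row_substochastic ?n ?E"
    using assms extremal_row_sum by (simp add: row_substochastic_def extremal_eq)
  moreover have "sigma_sum ?n ?E = s"
  proof -
    have "sigma_sum ?n ?E = (\<Sum>i<?n. if i < 2 * m + 2 then 1 else s - (real ?n - 1))"
      unfolding sigma_sum_def by (intro sum.cong refl extremal_row_sum) simp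
    also have "\<dots> = s" by (simp add: numeral_3_eq_3)
    finally show ?thesis .
  qed
  ultimately show ?thesis by (simp add: substoch_set_def)
qed

lemma id_minus_extremal_eq:
  "mat_minus idm (extremal (2 * m + 3) s) i j =
     (if j = i then 1 else if i < 2 * m + 2 \<and> j = partner i then -1
      else if i = 2 * m + 2 \<and> j = 2 * m + 1 then - (s - (real (2 * m + 3) - 1)) else 0)"
  by (auto simp: mat_minus_def idm_def extremal_eq)

definition swap_pairs :: "nat set \<Rightarrow> nat \<Rightarrow> nat" where
  "swap_pairs S i = (if i div 2 \<in> S then partner i else i)"

lemma swap_pairs_permutes:
  assumes "S \<subseteq> {..<k}" "2 * k \<le> n"
  shows "swap_pairs S permutes {..<n}"
proof (rule bij_imp_permutes)
  have outside: "swap_pairs S i = i" if "n \<le> i" for i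
  proof -
    have "i div 2 \<notin> {..<k}" using that assms(2) div_less_iff_less_mult[of 2 i k] by simp
    thus ?thesis using assms(1) by (auto simp: swap_pairs_def)
  qed
  have "swap_pairs S i < n" if "i < n" for i
  proof (cases "i div 2 \<in> S")
    case True
    hence "i < 2 * k" using assms(1) div_less_iff_less_mult[of 2 i k] by auto
    hence "partner i < 2 * k" using partner_less_iff by blast
    thus ?thesis using True assms(2) by (simp add: swap_pairs_def)
  qed (simp add: swap_pairs_def that)
  moreover have "swap_pairs S (swap_pairs S i) = i" for i by (simp add: swap_pairs_def)
  ultimately show "bij_betw (swap_pairs S) {..<n} {..<n}"
    by (intro bij_betw_byWitness[where f' = "swap_pairs S"]) auto
  show "swap_pairs S i = i" if "i \<notin> {..<n}" for i
    using that outside by simp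
qed

lemma inj_swap_pairs: "inj swap_pairs"
proof (rule injI)
  fix S T assume eq: "swap_pairs S = swap_pairs T"
  have mem: "j \<in> S \<longleftrightarrow> swap_pairs S (2 * j) \<noteq> 2 * j" for S j
    by (simp add: swap_pairs_def)
  show "S = T"
  proof (rule set_eqI)
    show "j \<in> S \<longleftrightarrow> j \<in> T" for j using mem[where S = S] mem[where S = T] eq by simp
  qed
qed

lemma prod_lessThan_double:
  fixes f :: "nat \<Rightarrow> 'a :: comm_monoid_mult"
  shows "(\<Prod>i<2 * k. f i) = (\<Prod>j<k. f (2 * j) * f (2 * j + 1))"
  by (induction k) (simp_all add: mult.assoc)

lemma prod_lessThan_2m3:
  fixes f :: "nat \<Rightarrow> 'a :: comm_monoid_mult"
  shows "(\<Prod>i<2 * m + 3. f i) =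
           (\<Prod>j<m. f (2 * j) * f (2 * j + 1)) * (f (2 * m) * f (2 * m + 1) * f (2 * m + 2))"
proof -
  have "(\<Prod>i<2 * m + 3. f i) = (\<Prod>i<2 * m. f i) * f (2 * m) * f (2 * m + 1) * f (2 * m + 2)"
    by (simp add: numeral_3_eq_3 mult.assoc)
  thus ?thesis by (simp add: prod_lessThan_double mult.assoc)
qed

text \<open>Every term of the permanent of \<open>I - E\<close> is nonnegative: the rows of each \<open>2\<times>2\<close> block
  contribute \<open>(\<plusminus>1)\<^sup>2\<close> or \<open>0\<close>, and the negative entry of the last row can only be used if the two
  rows above it are both sent into the single column \<open>2m\<close>.\<close>

lemma per_id_minus_extremal_term_nonneg:
  assumes "p permutes {..<2 * m + 3}" "real (2 * m + 3) - 1 \<le> s"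
  shows "0 \<le> (\<Prod>i<2 * m + 3. mat_minus idm (extremal (2 * m + 3) s) i (p i))"
proof -
  let ?h = "mat_minus idm (extremal (2 * m + 3) s)"
  have inj: "p x = p y \<longleftrightarrow> x = y" for x y using permutes_inj[OF assms(1)] by (simp add: inj_eq)
  have "0 \<le> ?h (2 * j) (p (2 * j)) * ?h (2 * j + 1) (p (2 * j + 1))" if "j \<le> m" for j
    using that inj[of "2 * j" "2 * j + 1"] by (simp add: id_minus_extremal_eq partner_def)
  hence "0 \<le> (\<Prod>j<m. ?h (2 * j) (p (2 * j)) * ?h (2 * j + 1) (p (2 * j + 1)))"
    by (intro prod_nonneg) auto
  moreover have "0 \<le> ?h (2 * m) (p (2 * m)) * ?h (2 * m + 1) (p (2 * m + 1)) * ?h (2 * m + 2) (p (2 * m + 2))"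
    using assms(2) inj[of "2 * m" "2 * m + 1"] inj[of "2 * m" "2 * m + 2"] inj[of "2 * m + 1" "2 * m + 2"]
    by (simp add: id_minus_extremal_eq partner_def)
  ultimately show ?thesis by (simp add: prod_lessThan_2m3)
qed

lemma per_id_minus_extremal_term_swap_pairs:
  assumes "S \<subseteq> {..m}"
  shows "(\<Prod>i<2 * m + 3. mat_minus idm (extremal (2 * m + 3) s) i (swap_pairs S i)) = 1"
proof -
  let ?h = "\<lambda>i. mat_minus idm (extremal (2 * m + 3) s) i (swap_pairs S i)"
  have pair: "?h (2 * j) * ?h (2 * j + 1) = 1" if "j \<le> m" for j
    using that by (simp add: id_minus_extremal_eq swap_pairs_def partner_def)
  have last: "?h (2 * m + 2) = 1"
    using assms by (auto simp: id_minus_extremal_eq swap_pairs_def)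
  have "(\<Prod>i<2 * m + 3. ?h i) = (\<Prod>j<m. ?h (2 * j) * ?h (2 * j + 1)) * (?h (2 * m) * ?h (2 * m + 1) * ?h (2 * m + 2))"
    by (rule prod_lessThan_2m3)
  also have "\<dots> = 1" using pair last by simp
  finally show ?thesis .
qed

lemma per_id_minus_extremal_ge:
  assumes "real (2 * m + 3) - 1 \<le> s"
  shows "2 ^ (m + 1) \<le> per (2 * m + 3) (mat_minus idm (extremal (2 * m + 3) s))"
proof -
  let ?t = "\<lambda>p. \<Prod>i<2 * m + 3. mat_minus idm (extremal (2 * m + 3) s) i (p i)"
  let ?P = "{p. p permutes {..<2 * m + 3}}" and ?Q = "swap_pairs ` Pow {..m}"
  have "?Q \<subseteq> ?P"
    by (auto intro!: swap_pairs_permutes[where k = "Suc m"])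
  have "(2::real) ^ (m + 1) = (\<Sum>p\<in>?Q. ?t p)"
    using per_id_minus_extremal_term_swap_pairs
    by (simp add: sum.reindex inj_on_subset[OF inj_swap_pairs] card_Pow)
  also have "\<dots> \<le> (\<Sum>p\<in>?P. ?t p)"
    using \<open>?Q \<subseteq> ?P\<close> assms per_id_minus_extremal_term_nonneg
    by (intro sum_mono2) (auto simp: finite_permutations)
  finally show ?thesis by (simp add: per_def)
qed

theorem mainTheorem15:
  fixes n :: nat and s :: real
  assumes "odd n" and "n \<ge> 3" and "real n - 1 < s" and "s \<le> real n"
  shows "(\<forall>A\<in>substoch_set n s. per n (mat_minus idm A) \<le> 2 ^ ((n - 1) div 2))
       \<and> extremal n s \<in> substoch_set n s
       \<and> per n (mat_minus idm (extremal n s)) = 2 ^ ((n - 1) div 2)"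
proof -
  obtain k where "n = 2 * k + 1" using assms(1) oddE by blast
  define m where "m = k - 1"
  have n: "n = 2 * m + 3" using \<open>n = 2 * k + 1\<close> assms(2) by (simp add: m_def)
  hence div2: "(n - 1) div 2 = n div 2" by simp
  have upper: "per n (mat_minus idm A) \<le> 2 ^ ((n - 1) div 2)" if "A \<in> substoch_set n s" for A
    using that per_id_minus_row_substochastic_le div2 by (simp add: substoch_set_def)
  have extremal_mem: "extremal n s \<in> substoch_set n s"
    using extremal_mem_substoch_set assms(3,4) n by simp
  have lower: "2 ^ ((n - 1) div 2) \<le> per n (mat_minus idm (extremal n s))"
    using per_id_minus_extremal_ge[of m s] assms(3) n by simp
  show ?thesis
    using upper extremal_mem order_antisym[OF upper[OF extremal_mem] lower] by blast
qed

end
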